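(* Let $\mathbf{A}$ be a full-rank real matrix, $\mathbf{y}$ a vector, and $\mathbf{x}^*\neq\mathbf{0}$ the solution of $\mathbf{A}\mathbf{x}=\mathbf{y}$. Consider the residual iteration algorithm: set $\mathbf{x}^{(0)}=\mathbf{0}$, $\mathbf{r}^{(0)}=\mathbf{y}$, and for $l=1,\dots,M$, solve the linear system $\mathbf{A}\,\delta\mathbf{x}=\mathbf{r}^{(l-1)}$ by a fixed-point Richardson iteration (started from $\mathbf{0}$ and run until convergence), obtaining an estimate $\delta\mathbf{x}^{(l)}$, then set $\mathbf{x}^{(l)}=\mathbf{x}^{(l-1)}+\delta\mathbf{x}^{(l)}$ and $\mathbf{r}^{(l)}=\mathbf{y}-\mathbf{A}\mathbf{x}^{(l)}$. Let $\theta$ be the asymptotic (normalized $\ell^2$) error of the fixed-point Richardson solver, so that each inner solve returns an estimate whose distance to the exact solution $\mathbf{z}$ of its system $\mathbf{A}\mathbf{z}=\mathbf{r}^{(l-1)}$ is at most $\theta\|\mathbf{z}\|_2$. Then the asymptotic error of the estimate after $M$ residue updates satisfies $$\theta^{(M)}:=\frac{\|\mathbf{x}^*-\mathbf{x}^{(M)}\|_2}{\|\mathbf{x}^*\|_2}\le\theta^M.$$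
   Context: Fixed-point Richardson iteration for $\mathbf{A}\mathbf{z}=\mathbf{r}$ with step size $\tau$: iterate $\mathbf{z}_{k+1}=(\mathbf{I}-\tau\mathbf{A}^T\mathbf{A})\mathbf{z}_k+\tau\mathbf{A}^T\mathbf{r}$, where the matrix-vector products are computed in fixed-point format (signed integer mantissas with one shared exponent per array, the exponents being readjusted to the current arrays), with a normalized $\ell^2$ product error $\eta$; its asymptotic error is $\theta=\limsup_k\|\mathbf{z}-\mathbf{z}_k\|_2/\|\mathbf{z}\|_2$, which under $0<\tau<2/\|\mathbf{A}^T\mathbf{A}\|_2$ and $\eta<\tau\|\mathbf{A}^T\mathbf{A}\|_2/(\kappa-\tau\|\mathbf{A}^T\mathbf{A}\|_2)$ is at most $\eta(\kappa/(\tau\|\mathbf{A}^T\mathbf{A}\|_2)-1)$, $\kappa$ being the condition number of $\mathbf{A}^T\mathbf{A}$. $\|\cdot\|_2$ is the Euclidean norm. *)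

theory Defs
  imports "HOL-Analysis.Analysis"
begin

primrec resid_iterate :: "(nat \<Rightarrow> real^'n) \<Rightarrow> nat \<Rightarrow> real^'n" where
  "resid_iterate dx 0 = 0"
| "resid_iterate dx (Suc l) = resid_iterate dx l + dx (Suc l)"

definition resid :: "real^'n^'m \<Rightarrow> real^'m \<Rightarrow> (nat \<Rightarrow> real^'n) \<Rightarrow> nat \<Rightarrow> real^'m" where
  "resid A y dx l = y - A *v resid_iterate dx l"

end

theory Submission
  imports Defs
begin

text \<open>The error e l = xstar - x l solves A z = r l, and the correction dx (l + 1) is the
  inner solver's estimate of exactly this z. Hence the new error z - dx (l + 1) is at most \<theta>
  times the old one, and M residue updates shrink the initial error xstar by \<theta> ^ M.\<close>

lemma resid_eq_mult_error:
  assumes "A *v xstar = y"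
  shows "resid A y dx l = A *v (xstar - resid_iterate dx l)"
  using assms by (simp add: resid_def matrix_vector_mult_diff_distrib)

lemma resid_iterate_error_contracts:
  assumes "A *v xstar = y"
    and "\<And>z. A *v z = resid A y dx l \<Longrightarrow> norm (z - dx (Suc l)) \<le> \<theta> * norm z"
  shows "norm (xstar - resid_iterate dx (Suc l)) \<le> \<theta> * norm (xstar - resid_iterate dx l)"
  using assms(2)[OF resid_eq_mult_error[OF assms(1), symmetric]]
  by (simp add: algebra_simps)

lemma geometric_bound_of_stepwise_bound:
  fixes e :: "nat \<Rightarrow> 'a::linordered_idom"
  assumes "0 \<le> \<theta>" and "\<And>l. l < M \<Longrightarrow> e (Suc l) \<le> \<theta> * e l"
  shows "e M \<le> \<theta> ^ M * e 0"
  using assms(2)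
proof (induction M)
  case 0
  then show ?case by simp
next
  case (Suc M)
  have "e (Suc M) \<le> \<theta> * e M"
    using Suc.prems by simp
  also have "\<dots> \<le> \<theta> * (\<theta> ^ M * e 0)"
    using Suc by (intro mult_left_mono) (simp_all add: \<open>0 \<le> \<theta>\<close>)
  finally show ?case
    by (simp add: mult.assoc)
qed

theorem theorem2:
  fixes A :: "real^'n^'m" and y :: "real^'m" and xstar :: "real^'n"
    and dx :: "nat \<Rightarrow> real^'n" and \<theta> :: real and M :: nat
  assumes full_rank: "rank A = CARD('n)"
    and sol: "A *v xstar = y"
    and nz: "xstar \<noteq> 0"
    and inner: "\<And>l z. l \<in> {1..M} \<Longrightarrow> A *v z = resid A y dx (l - 1) \<Longrightarrow>
                   norm (z - dx l) \<le> \<theta> * norm z"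
  shows "norm (xstar - resid_iterate dx M) / norm xstar \<le> \<theta> ^ M"
proof -
  let ?err = "\<lambda>l. norm (xstar - resid_iterate dx l)"
  have contracts: "?err (Suc l) \<le> \<theta> * ?err l" if "l < M" for l
    using that by (intro resid_iterate_error_contracts[OF sol]) (auto intro: inner[of "Suc l", simplified])
  have norm_pos: "0 < norm xstar"
    using nz by simp
  show ?thesis
  proof (cases "M = 0")
    case True
    then show ?thesis using norm_pos by simp
  next
    case False
    have "0 \<le> \<theta> * norm xstar"
      using order_trans[OF norm_ge_zero contracts[of 0]] False by simp
    then have "0 \<le> \<theta>"
      using norm_pos by (simp add: zero_le_mult_iff)
    then have "?err M \<le> \<theta> ^ M * norm xstar"
      using geometric_bound_of_stepwise_bound[of \<theta> M ?err] contracts by simp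
    then show ?thesis
      using norm_pos by (simp add: divide_le_eq)
  qed
qed

end
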